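(* Let $W$ be a Banach space and $V=W^*$ its dual Banach space; write $(V,\|\cdot\|)$ for $V$ with the norm topology and $(V,w^* )$ for $V$ with the weak$^*$ topology. Let $X$ be a connected, locally connected, Hausdorff, normal, first countable topological space and $f:X\to V$ a map such that $f:X\to(V,\|\cdot\|)$ is continuous, has local convexity data and is locally fiber connected, and $f:X\to(V,w^* )$ is closed. Then $\tilde f:X_f\to V$ is a proper map with respect to both topologies on $V$, and for every $[x]\in X_f$ and $r>0$ the set $B_r([x]):=\{[y]\in X_f\mid d([x],[y])\le r\}$ is compact in $X_f$.
   Context: Local convexity data and local fiber connectedness are taken with respect to the norm topology of $V$. A subset $C\subset V$ is a cone with vertex $v_0$ if $v_0\in C$ and $(1-\lambda)v_0+\lambda v\in C$ for every $\lambda\ge 0$ and every $v\in C$, $v\ne v_0$; it is a convex cone if it is moreover convex. A continuous map $f:X\to V$ has local convexity data if for each $x\in X$ and every sufficiently small open neighborhood $U_x$ of $x$ there is a convex cone $C_x\subset V$ with vertex $f(x)$, endowed with the subspace topology from $V$, such that (VN) $f(U_x)\subset C_x$ and $f(U_x)$ is a neighborhood of $f(x)$ in $C_x$; and (SLO) $f|_{U_x}:U_x\to C_x$ is an open map, and for every neighborhood $U'_x\subset U_x$ of $x$ the set $f(U'_x)$ is a neighborhood of $f(x)$ in $C_x$. A subset $A\subset X$ satisfies condition (LFC) if for every $a\in A$, the set $A$ does not intersect two different connected components of the fiber $f^{-1}(f(a))$. The map $f$ is locally fiber connected if for every $x\in X$, every open neighborhood of $x$ contains a neighborhood $U_x$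 of $x$ satisfying (LFC). Declare $x\sim y$ in $X$ iff $f(x)=f(y)$ and $x,y$ lie in the same connected component of $f^{-1}(f(x))$; $X_f:=X/\!\sim$ with the quotient topology, $\pi_f:X\to X_f$ is the projection and $\tilde f:X_f\to V$ is the unique map with $\tilde f\circ\pi_f=f$. The distance $d$ on $X_f$: $d([x],[y])$ is the infimum of the lengths $l(\tilde f\circ\gamma)$, measured with the norm distance of $V$, over all continuous curves $\gamma:[a,b]\to X_f$ with $\gamma(a)=[x]$, $\gamma(b)=[y]$. A continuous map between Hausdorff spaces is proper if it is closed and all its fibers are compact. *)

theory Defs
  imports "HOL-Analysis.Analysis"
begin

definition weak_star_topology :: "('w::real_normed_vector \<Rightarrow>\<^sub>L real) topology" where
  "weak_star_topology =
     pullback_topology UNIV (\<lambda>\<phi> w. blinfun_apply \<phi> w) (product_topology (\<lambda>_. euclideanreal) UNIV)"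

definition nbhd_in :: "'a topology \<Rightarrow> 'a \<Rightarrow> 'a set \<Rightarrow> bool" where
  "nbhd_in T p S \<longleftrightarrow> (\<exists>G. openin T G \<and> p \<in> G \<and> G \<subseteq> S)"

definition is_cone_with_vertex :: "'v::real_vector set \<Rightarrow> 'v \<Rightarrow> bool" where
  "is_cone_with_vertex C v0 \<longleftrightarrow> v0 \<in> C \<and>
     (\<forall>t::real. \<forall>v\<in>C. t \<ge> 0 \<and> v \<noteq> v0 \<longrightarrow> (1 - t) *\<^sub>R v0 + t *\<^sub>R v \<in> C)"

definition is_convex_cone_with_vertex :: "'v::real_vector set \<Rightarrow> 'v \<Rightarrow> bool" where
  "is_convex_cone_with_vertex C v0 \<longleftrightarrow> is_cone_with_vertex C v0 \<and> convex C"

definition has_local_convexity_data :: "'a topology \<Rightarrow> ('a \<Rightarrow> 'v::real_normed_vector) \<Rightarrow> bool" where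
  "has_local_convexity_data X f \<longleftrightarrow>
     (\<forall>x\<in>topspace X. \<exists>N. openin X N \<and> x \<in> N \<and>
        (\<forall>U. openin X U \<and> x \<in> U \<and> U \<subseteq> N \<longrightarrow>
           (\<exists>C. is_convex_cone_with_vertex C (f x) \<and>
                f ` U \<subseteq> C \<and>
                nbhd_in (subtopology euclidean C) (f x) (f ` U) \<and>
                open_map (subtopology X U) (subtopology euclidean C) f \<and>
                (\<forall>U'. U' \<subseteq> U \<and> nbhd_in X x U' \<longrightarrow>
                       nbhd_in (subtopology euclidean C) (f x) (f ` U')))))"

definition fiber :: "'a topology \<Rightarrow> ('a \<Rightarrow> 'v) \<Rightarrow> 'v \<Rightarrow> 'a set" where
  "fiber X f v = {z \<in> topspace X. f z = v}"

definition LFC :: "'a topology \<Rightarrow> ('a \<Rightarrow> 'v) \<Rightarrow> 'a set \<Rightarrow> bool" where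
  "LFC X f A \<longleftrightarrow>
     (\<forall>a\<in>A. \<forall>y\<in>A. \<forall>z\<in>A. f y = f a \<and> f z = f a \<longrightarrow>
        connected_component_of (subtopology X (fiber X f (f a))) y z)"

definition locally_fiber_connected :: "'a topology \<Rightarrow> ('a \<Rightarrow> 'v) \<Rightarrow> bool" where
  "locally_fiber_connected X f \<longleftrightarrow>
     (\<forall>x\<in>topspace X. \<forall>G. openin X G \<and> x \<in> G \<longrightarrow>
        (\<exists>U. U \<subseteq> G \<and> nbhd_in X x U \<and> LFC X f U))"

definition fclass :: "'a topology \<Rightarrow> ('a \<Rightarrow> 'v) \<Rightarrow> 'a \<Rightarrow> 'a set" where
  "fclass X f x = {y. f y = f x \<and> connected_component_of (subtopology X (fiber X f (f x))) x y}"

definition Xf :: "'a topology \<Rightarrow> ('a \<Rightarrow> 'v) \<Rightarrow> 'a set set" where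
  "Xf X f = fclass X f ` topspace X"

definition quotient_topology :: "'a topology \<Rightarrow> ('a \<Rightarrow> 'b) \<Rightarrow> 'b topology" where
  "quotient_topology X p =
     topology (\<lambda>U. U \<subseteq> p ` topspace X \<and> openin X {x \<in> topspace X. p x \<in> U})"

definition Xf_topology :: "'a topology \<Rightarrow> ('a \<Rightarrow> 'v) \<Rightarrow> 'a set topology" where
  "Xf_topology X f = quotient_topology X (fclass X f)"

definition ftilde :: "('a \<Rightarrow> 'v) \<Rightarrow> 'a set \<Rightarrow> 'v" where
  "ftilde f c = f (SOME x. x \<in> c)"

definition curve_length :: "real \<Rightarrow> real \<Rightarrow> (real \<Rightarrow> 'v::real_normed_vector) \<Rightarrow> ereal" where
  "curve_length a b c =
     (SUP (n, t) \<in> {(n::nat, t::nat \<Rightarrow> real). t 0 = a \<and> t n = b \<and> (\<forall>i<n. t i \<le> t (Suc i))}.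
        ereal (\<Sum>i<n. norm (c (t (Suc i)) - c (t i))))"

definition Xf_dist :: "'a topology \<Rightarrow> ('a \<Rightarrow> 'v::real_normed_vector) \<Rightarrow> 'a set \<Rightarrow> 'a set \<Rightarrow> ereal" where
  "Xf_dist X f p q =
     (INF (a, b, \<gamma>) \<in> {(a, b, \<gamma>). a \<le> b \<and>
          continuous_map (subtopology euclideanreal {a..b}) (Xf_topology X f) \<gamma> \<and>
          \<gamma> a = p \<and> \<gamma> b = q}.
        curve_length a b (ftilde f \<circ> \<gamma>))"

end

theory Submission
  imports Defs
begin

text \<open>Continuity and closedness of \<open>f\<close> descend to \<open>ftilde\<close> on the quotient \<open>X_f\<close>, and weak-star closed
  sets are norm closed; so properness of \<open>ftilde\<close> for both topologies comes down to finiteness of its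
  fibres. A fibre containing infinitely many classes would give a closed discrete sequence of
  representatives, and normality lets one perturb it to a closed sequence \<open>z n\<close> with \<open>f (z n) \<noteq> v\<close>
  and \<open>f (z n) \<rightarrow> v\<close> (possible because \<open>f\<close> is nowhere locally constant), contradicting weak-star
  closedness of \<open>f\<close>.

  For the balls, local convexity data allows short segments ending at \<open>f y\<close> to be lifted to paths
  in \<open>X_f\<close> ending at the class of \<open>y\<close>. Hence the distance from a fixed class is lower semicontinuous
  and closed balls are closed. A closed ball of radius \<open>r\<close> lies in the preimage of a norm ball of
  radius \<open>r\<close>, which is weak-star compact (Banach-Alaoglu), and \<open>ftilde\<close> is weak-star proper.\<close>

section \<open>The quotient by components of fibres\<close>

lemma openin_quotient_topology:
  "openin (quotient_topology X p) U \<longleftrightarrow> U \<subseteq> p ` topspace X \<and> openin X {x \<in> topspace X. p x \<in> U}"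
proof -
  have "istopology (\<lambda>U. U \<subseteq> p ` topspace X \<and> openin X {x \<in> topspace X. p x \<in> U})"
  proof -
    have "{x \<in> topspace X. p x \<in> S \<inter> T} = {x \<in> topspace X. p x \<in> S} \<inter> {x \<in> topspace X. p x \<in> T}"
      for S T by auto
    moreover have "{x \<in> topspace X. p x \<in> \<Union>\<K>} = (\<Union>S\<in>\<K>. {x \<in> topspace X. p x \<in> S})" for \<K>
      by auto
    ultimately show ?thesis
      unfolding istopology_def by auto
  qed
  then show ?thesis
    unfolding quotient_topology_def by (simp add: topology_inverse')
qed

lemma topspace_quotient_topology: "topspace (quotient_topology X p) = p ` topspace X"
proof -
  have "{x \<in> topspace X. p x \<in> p ` topspace X} = topspace X"
    by auto
  then have "openin (quotient_topology X p) (p ` topspace X)"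
    unfolding openin_quotient_topology by auto
  then show ?thesis
    by (metis openin_quotient_topology openin_subset openin_topspace subset_antisym)
qed

lemma quotient_map_quotient_topology: "quotient_map X (quotient_topology X p) p"
  unfolding quotient_map_def topspace_quotient_topology openin_quotient_topology by auto

lemma topspace_Xf_topology: "topspace (Xf_topology X f) = Xf X f"
  by (simp add: Xf_topology_def topspace_quotient_topology Xf_def)

lemma quotient_map_fclass: "quotient_map X (Xf_topology X f) (fclass X f)"
  unfolding Xf_topology_def by (rule quotient_map_quotient_topology)

lemma fclass_refl: "x \<in> topspace X \<Longrightarrow> x \<in> fclass X f x"
  unfolding fclass_def by (auto simp: connected_component_of_refl fiber_def)

lemma fclass_eqI:
  assumes "connected_component_of (subtopology X (fiber X f (f x))) x y"
  shows "fclass X f y = fclass X f x"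
proof -
  have "y \<in> topspace (subtopology X (fiber X f (f x)))"
    using assms connected_component_of_equiv by metis
  then have "f y = f x"
    by (simp add: fiber_def)
  then show ?thesis
    unfolding fclass_def using assms connected_component_of_equiv
    by (metis (no_types, lifting) connected_component_of_sym)
qed

lemma ftilde_fclass: "x \<in> topspace X \<Longrightarrow> ftilde f (fclass X f x) = f x"
  unfolding ftilde_def using someI[of "\<lambda>y. y \<in> fclass X f x", OF fclass_refl]
  by (simp add: fclass_def)

lemma LFC_subset: "LFC X f U \<Longrightarrow> G \<subseteq> U \<Longrightarrow> LFC X f G"
  unfolding LFC_def by blast

lemma LFC_imp_fclass_eq:
  assumes "LFC X f G" "a \<in> G" "b \<in> G" "f a = f b"
  shows "fclass X f a = fclass X f b"
  using assms fclass_eqI unfolding LFC_def by metis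

lemma ftilde_image:
  assumes "U \<subseteq> Xf X f"
  shows "ftilde f ` U = f ` {x \<in> topspace X. fclass X f x \<in> U}"
proof -
  let ?P = "{x \<in> topspace X. fclass X f x \<in> U}"
  have "U = fclass X f ` ?P"
    using assms by (auto simp: Xf_def)
  then have "ftilde f ` U = ftilde f ` fclass X f ` ?P"
    by (rule arg_cong)
  also have "\<dots> = (\<lambda>x. ftilde f (fclass X f x)) ` ?P"
    by (rule image_image)
  also have "\<dots> = f ` ?P"
    by (rule image_cong) (simp_all add: ftilde_fclass)
  finally show ?thesis .
qed

lemma fiber_ftilde:
  "{c \<in> Xf X f. ftilde f c = v} = fclass X f ` {x \<in> topspace X. f x = v}"
proof -
  have "{c \<in> Xf X f. ftilde f c = v} = fclass X f ` {x \<in> topspace X. ftilde f (fclass X f x) = v}"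
    unfolding Xf_def by blast
  also have "\<dots> = fclass X f ` {x \<in> topspace X. f x = v}"
    by (rule arg_cong[where f="image (fclass X f)"]) (auto simp: ftilde_fclass)
  finally show ?thesis .
qed

lemma continuous_map_ftilde:
  "continuous_map X Y f \<Longrightarrow> continuous_map (Xf_topology X f) Y (ftilde f)"
  by (rule continuous_compose_quotient_map[OF quotient_map_fclass])
     (simp add: continuous_map_eq o_def ftilde_fclass)

lemma closed_map_ftilde:
  assumes "closed_map X Y f"
  shows "closed_map (Xf_topology X f) Y (ftilde f)"
  unfolding closed_map_def
proof (intro allI impI)
  fix U assume "closedin (Xf_topology X f) U"
  then have "U \<subseteq> Xf X f" "closedin X {x \<in> topspace X. fclass X f x \<in> U}"
    using quotient_map_fclass[of X f] closedin_subset[of "Xf_topology X f" U]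
    unfolding quotient_map_closedin topspace_Xf_topology by auto
  then show "closedin Y (ftilde f ` U)"
    using assms by (simp add: closed_map_def ftilde_image)
qed

section \<open>The weak-star topology\<close>

lemma weak_star_topology_eq_strong_operator_topology:
  "weak_star_topology = strong_operator_topology"
  unfolding weak_star_topology_def strong_operator_topology_def euclidean_product_topology ..

lemma topspace_weak_star_topology [simp]: "topspace weak_star_topology = UNIV"
  by (simp add: weak_star_topology_eq_strong_operator_topology strong_operator_topology_topspace)

lemma continuous_map_weak_star_id: "continuous_map euclidean weak_star_topology (\<lambda>x. x)"
  unfolding weak_star_topology_eq_strong_operator_topology
  by (rule strong_operator_topology_weaker_than_euclidean)

lemma closedin_weak_star_imp_closed: "closedin weak_star_topology S \<Longrightarrow> closed S"
  using closedin_continuous_map_preimage[OF continuous_map_weak_star_id, of S] by simp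

lemma closed_map_weak_star_imp_closed_map:
  "closed_map T weak_star_topology g \<Longrightarrow> closed_map T euclidean g"
  unfolding closed_map_def by (auto intro: closedin_weak_star_imp_closed)

text \<open>Banach-Alaoglu: as functions, the functionals in the ball form a closed subset of a product of
  compact intervals.\<close>

lemma compactin_weak_star_cball:
  fixes v0 :: "'w::real_normed_vector \<Rightarrow>\<^sub>L real"
  assumes "0 \<le> r"
  shows "compactin weak_star_topology (cball v0 r)"
proof -
  define K where "K = {g :: 'w \<Rightarrow> real. (\<forall>x y. g (x + y) = g x + g y) \<and> (\<forall>c x. g (c *\<^sub>R x) = c * g x)
    \<and> (\<forall>w. \<bar>g w - v0 w\<bar> \<le> r * norm w)}"
  have "closed K"
    unfolding K_def
    by (intro closed_Collect_conj closed_Collect_all closed_Collect_eq closed_Collect_le continuous_intros; simp?)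
  moreover have "compactin (product_topology (\<lambda>_. euclideanreal) UNIV) (PiE UNIV (\<lambda>w. cball (v0 w) (r * norm w)))"
    unfolding compactin_PiE by auto
  then have "compact (PiE UNIV (\<lambda>w. cball (v0 w) (r * norm w)))"
    by (simp add: euclidean_product_topology)
  moreover have "K \<subseteq> PiE UNIV (\<lambda>w. cball (v0 w) (r * norm w))"
    unfolding K_def by (auto simp: dist_real_def abs_minus_commute)
  ultimately have "compact K"
    using compact_Int_closed by (metis inf.absorb2)
  have linear_K: "bounded_linear g" if "g \<in> K" for g
  proof (rule bounded_linear_intro[where K = "norm v0 + r"])
    show "g (x + y) = g x + g y" "g (c *\<^sub>R x) = c *\<^sub>R g x" for x y c
      using that by (simp_all add: K_def)
    show "norm (g x) \<le> norm x * (norm v0 + r)" for x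
    proof -
      have "\<bar>g x - v0 x\<bar> \<le> r * norm x" "\<bar>v0 x\<bar> \<le> norm v0 * norm x"
        using that norm_blinfun[of v0 x] by (simp_all add: K_def)
      then show ?thesis
        by (simp add: algebra_simps)
    qed
  qed
  have K_eq: "K = blinfun_apply ` cball v0 r"
  proof (intro equalityI subsetI)
    fix g assume "g \<in> K"
    have "norm (Blinfun g - v0) \<le> r"
    proof (rule norm_blinfun_bound[OF assms])
      show "norm (blinfun_apply (Blinfun g - v0) x) \<le> r * norm x" for x
        using \<open>g \<in> K\<close> by (simp add: blinfun.diff_left bounded_linear_Blinfun_apply linear_K K_def)
    qed
    moreover have "blinfun_apply (Blinfun g) = g"
      using \<open>g \<in> K\<close> by (simp add: bounded_linear_Blinfun_apply linear_K)
    ultimately show "g \<in> blinfun_apply ` cball v0 r"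
      by (intro image_eqI[of g _ "Blinfun g"]) (auto simp: dist_norm norm_minus_commute)
  next
    fix g assume "g \<in> blinfun_apply ` cball v0 r"
    then obtain \<phi> where "\<phi> \<in> cball v0 r" and g: "g = blinfun_apply \<phi>"
      by blast
    then have "norm (\<phi> - v0) \<le> r"
      by (simp add: dist_norm norm_minus_commute)
    have "\<bar>blinfun_apply (\<phi> - v0) w\<bar> \<le> r * norm w" for w
      using norm_blinfun[of "\<phi> - v0" w] mult_right_mono[OF \<open>norm (\<phi> - v0) \<le> r\<close> norm_ge_zero[of w]]
      by simp
    then show "g \<in> K"
      unfolding K_def g by (simp add: blinfun.add_right blinfun.scaleR_right blinfun.diff_left)
  qed
  have "continuous_map (subtopology euclidean K) strong_operator_topology Blinfun"
    unfolding continuous_on_strong_operator_topo_iff_coordinatewise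
  proof
    fix w
    have "continuous_map (subtopology euclidean K) euclidean (\<lambda>g. g w)"
      by (simp add: continuous_on_subset[OF continuous_on_product_coordinates])
    then show "continuous_map (subtopology euclidean K) euclidean (\<lambda>g. blinfun_apply (Blinfun g) w)"
      by (rule continuous_map_eq) (simp add: linear_K bounded_linear_Blinfun_apply)
  qed
  moreover have "compactin (subtopology euclidean K) K"
    using \<open>compact K\<close> by (simp add: compactin_subtopology)
  moreover have "Blinfun ` K = cball v0 r"
    unfolding K_eq image_image blinfun_apply_inverse by simp
  ultimately show ?thesis
    using image_compactin unfolding weak_star_topology_eq_strong_operator_topology by metis
qed

section \<open>Length of curves\<close>

definition is_partition :: "real \<Rightarrow> real \<Rightarrow> nat \<Rightarrow> (nat \<Rightarrow> real) \<Rightarrow> bool" where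
  "is_partition a b n t \<longleftrightarrow> t 0 = a \<and> t n = b \<and> (\<forall>i<n. t i \<le> t (Suc i))"

definition inscribed_length :: "(real \<Rightarrow> 'v::real_normed_vector) \<Rightarrow> nat \<Rightarrow> (nat \<Rightarrow> real) \<Rightarrow> real" where
  "inscribed_length c n t = (\<Sum>i<n. norm (c (t (Suc i)) - c (t i)))"

lemma curve_length_partitions:
  "curve_length a b c = (SUP (n, t) \<in> {(n, t). is_partition a b n t}. ereal (inscribed_length c n t))"
  unfolding curve_length_def is_partition_def inscribed_length_def ..

lemma inscribed_length_le_curve_length:
  "is_partition a b n t \<Longrightarrow> ereal (inscribed_length c n t) \<le> curve_length a b c"
  unfolding curve_length_partitions by (rule SUP_upper2[where i = "(n, t)"]) auto

lemma is_partition_mono: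
  assumes "is_partition a b n t" "i \<le> j" "j \<le> n"
  shows "t i \<le> t j"
proof -
  have "\<And>k. k \<in> {..<n} \<Longrightarrow> t k \<le> t (Suc k)"
    using assms(1) by (simp add: is_partition_def)
  moreover have "{i..<j} \<subseteq> {..<n}"
    using assms(3) by auto
  ultimately show ?thesis
    using assms(2) lift_Suc_mono_le_ivl by metis
qed

lemma is_partition_bounds:
  assumes "is_partition a b n t" "i \<le> n"
  shows "a \<le> t i" "t i \<le> b"
  using is_partition_mono[OF assms(1), of 0 i] is_partition_mono[OF assms(1), of i n] assms(1,2)
  unfolding is_partition_def by simp_all

lemma norm_le_curve_length:
  assumes "a \<le> b"
  shows "ereal (norm (c b - c a)) \<le> curve_length a b c"
proof -
  have "is_partition a b 1 (\<lambda>i. if i = 0 then a else b)"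
    using assms by (simp add: is_partition_def)
  from inscribed_length_le_curve_length[OF this, of c] show ?thesis
    by (simp add: inscribed_length_def)
qed

lemma curve_length_cong:
  assumes "\<And>s. a \<le> s \<Longrightarrow> s \<le> b \<Longrightarrow> c s = d s"
  shows "curve_length a b c = curve_length a b d"
proof -
  have "inscribed_length c n t = inscribed_length d n t" if "is_partition a b n t" for n t
    unfolding inscribed_length_def
    using is_partition_bounds[OF that] assms by (intro sum.cong) (auto simp: Suc_leI)
  then show ?thesis
    unfolding curve_length_partitions by (intro SUP_cong) auto
qed

text \<open>Clamping a partition of \<open>[a, b]\<close> at \<open>m\<close> from above and from below splits it into partitions of
  \<open>[a, m]\<close> and \<open>[m, b]\<close>; only the step crossing \<open>m\<close> needs the triangle inequality.\<close>

lemma inscribed_length_split: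
  assumes t: "is_partition a b n t" and "a \<le> m" "m \<le> b"
  shows "is_partition a m n (\<lambda>i. min (t i) m)" "is_partition m b n (\<lambda>i. max (t i) m)"
    and "inscribed_length c n t
           \<le> inscribed_length c n (\<lambda>i. min (t i) m) + inscribed_length c n (\<lambda>i. max (t i) m)"
proof -
  show "is_partition a m n (\<lambda>i. min (t i) m)" "is_partition m b n (\<lambda>i. max (t i) m)"
    using assms by (auto simp: is_partition_def)
  have step: "norm (c y - c x) \<le> norm (c (min y m) - c (min x m)) + norm (c (max y m) - c (max x m))"
    if "x \<le> y" for x y
  proof (cases "x \<le> m \<and> m \<le> y")
    case True
    then show ?thesis
      using norm_triangle_ineq[of "c m - c x" "c y - c m"] by (simp add: max_absorb1 max_absorb2)
  next
    case False
    with that consider "y \<le> m" | "m \<le> x"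
      by linarith
    then show ?thesis
      using that by cases (simp_all add: min_absorb1 min_absorb2 max_absorb1 max_absorb2)
  qed
  show "inscribed_length c n t
          \<le> inscribed_length c n (\<lambda>i. min (t i) m) + inscribed_length c n (\<lambda>i. max (t i) m)"
    unfolding inscribed_length_def sum.distrib[symmetric]
    using t by (intro sum_mono step) (simp add: is_partition_def)
qed

lemma curve_length_subadditive:
  assumes "a \<le> m" "m \<le> b"
  shows "curve_length a b c \<le> curve_length a m c + curve_length m b c"
  unfolding curve_length_partitions[of a b]
proof (rule SUP_least, clarify)
  fix n t assume t: "is_partition a b n t"
  have "ereal (inscribed_length c n t)
          \<le> ereal (inscribed_length c n (\<lambda>i. min (t i) m)) + ereal (inscribed_length c n (\<lambda>i. max (t i) m))"
    using inscribed_length_split(3)[OF t assms, of c] by simp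
  also have "\<dots> \<le> curve_length a m c + curve_length m b c"
    by (intro add_mono inscribed_length_le_curve_length inscribed_length_split(1,2)[OF t assms])
  finally show "ereal (inscribed_length c n t) \<le> curve_length a m c + curve_length m b c" .
qed

lemma curve_length_linear_le:
  assumes "\<And>s. a \<le> s \<Longrightarrow> s \<le> b \<Longrightarrow> c s = u + s *\<^sub>R w"
  shows "curve_length a b c \<le> ereal ((b - a) * norm w)"
  unfolding curve_length_partitions
proof (rule SUP_least, clarify)
  fix n t assume t: "is_partition a b n t"
  have "inscribed_length c n t = (\<Sum>i<n. (t (Suc i) - t i) * norm w)"
    unfolding inscribed_length_def
  proof (intro sum.cong refl)
    fix i assume "i \<in> {..<n}"
    then have "c (t (Suc i)) - c (t i) = (t (Suc i) - t i) *\<^sub>R w" "t i \<le> t (Suc i)"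
      using assms is_partition_bounds[OF t, of i] is_partition_bounds[OF t, of "Suc i"] t
      by (auto simp: algebra_simps is_partition_def)
    then show "norm (c (t (Suc i)) - c (t i)) = (t (Suc i) - t i) * norm w"
      by simp
  qed
  also have "\<dots> = (b - a) * norm w"
    using t by (simp add: sum_distrib_right[symmetric] sum_lessThan_telescope is_partition_def)
  finally show "ereal (inscribed_length c n t) \<le> ereal ((b - a) * norm w)"
    by simp
qed

section \<open>Paths in the quotient and closed balls\<close>

lemma Xf_dist_le_curve_length:
  assumes "a \<le> b" "continuous_map (subtopology euclideanreal {a..b}) (Xf_topology X f) \<gamma>"
    and "\<gamma> a = p" "\<gamma> b = q"
  shows "Xf_dist X f p q \<le> curve_length a b (ftilde f \<circ> \<gamma>)"
  unfolding Xf_dist_def by (rule INF_lower2[where i = "(a, b, \<gamma>)"]) (use assms in auto)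

lemma norm_le_Xf_dist: "ereal (norm (ftilde f p - ftilde f q)) \<le> Xf_dist X f p q"
  unfolding Xf_dist_def
proof (rule INF_greatest, clarify)
  fix a b :: real and \<gamma>
  assume "a \<le> b"
  then show "ereal (norm (ftilde f (\<gamma> a) - ftilde f (\<gamma> b))) \<le> curve_length a b (ftilde f \<circ> \<gamma>)"
    using norm_le_curve_length[of a b "ftilde f \<circ> \<gamma>"] by (simp add: norm_minus_commute)
qed

lemma continuous_map_join_paths:
  assumes "a \<le> b"
    and "continuous_map (subtopology euclideanreal {a..b}) T \<gamma>1"
    and "continuous_map (subtopology euclideanreal {0..1}) T \<gamma>2"
    and "\<gamma>1 b = \<gamma>2 0"
  shows "continuous_map (subtopology euclideanreal {a..b + 1}) T (\<lambda>t. if t \<le> b then \<gamma>1 t else \<gamma>2 (t - b))"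
proof (rule continuous_map_cases_le)
  have "subtopology (subtopology euclideanreal {a..b + 1}) {t \<in> topspace (subtopology euclideanreal {a..b + 1}). t \<le> b}
      = subtopology euclideanreal {a..b}"
    using assms(1) by (simp add: subtopology_subtopology) (intro arg_cong[where f = "subtopology euclideanreal"]; auto)
  then show "continuous_map (subtopology (subtopology euclideanreal {a..b + 1})
      {t \<in> topspace (subtopology euclideanreal {a..b + 1}). t \<le> b}) T \<gamma>1"
    using assms(2) by simp
  have "subtopology (subtopology euclideanreal {a..b + 1}) {t \<in> topspace (subtopology euclideanreal {a..b + 1}). b \<le> t}
      = subtopology euclideanreal {b..b + 1}"
    using assms(1) by (simp add: subtopology_subtopology) (intro arg_cong[where f = "subtopology euclideanreal"]; auto)
  moreover have "continuous_map (subtopology euclideanreal {b..b + 1}) (subtopology euclideanreal {0..1}) (\<lambda>t. t - b)"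
    by (auto intro!: continuous_map_into_subtopology continuous_map_from_subtopology continuous_intros)
  ultimately show "continuous_map (subtopology (subtopology euclideanreal {a..b + 1})
      {t \<in> topspace (subtopology euclideanreal {a..b + 1}). b \<le> t}) T (\<lambda>t. \<gamma>2 (t - b))"
    using continuous_map_compose[of _ _ "\<lambda>t. t - b", OF _ assms(3)] by (simp add: o_def)
qed (use assms(4) in \<open>simp_all add: continuous_map_from_subtopology\<close>)

definition lifted_segment ::
    "'a topology \<Rightarrow> ('a \<Rightarrow> 'v::real_vector) \<Rightarrow> (real \<Rightarrow> 'a set) \<Rightarrow> 'v \<Rightarrow> 'v \<Rightarrow> bool" where
  "lifted_segment X f \<gamma> u v \<longleftrightarrow> continuous_map (subtopology euclideanreal {0..1}) (Xf_topology X f) \<gamma> \<and>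
     (\<forall>s\<in>{0..1}. ftilde f (\<gamma> s) = u + s *\<^sub>R (v - u))"

lemma Xf_dist_le_add_segment:
  assumes "Xf_dist X f p q < ereal r" and "lifted_segment X f \<gamma> u v" "\<gamma> 0 = q" "\<gamma> 1 = q'"
  shows "Xf_dist X f p q' \<le> ereal (r + norm (v - u))"
proof -
  define w where "w = v - u"
  have \<gamma>: "continuous_map (subtopology euclideanreal {0..1}) (Xf_topology X f) \<gamma>" "\<gamma> 0 = q"
    and segment: "\<And>s. s \<in> {0..1} \<Longrightarrow> ftilde f (\<gamma> s) = u + s *\<^sub>R w"
    using assms(2,3) by (simp_all add: lifted_segment_def w_def)
  obtain a b \<gamma>1 where \<gamma>1: "a \<le> b" "continuous_map (subtopology euclideanreal {a..b}) (Xf_topology X f) \<gamma>1"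
      "\<gamma>1 a = p" "\<gamma>1 b = q" "curve_length a b (ftilde f \<circ> \<gamma>1) < ereal r"
    using assms(1) unfolding Xf_dist_def INF_less_iff by auto
  define \<delta> where "\<delta> = (\<lambda>t. if t \<le> b then \<gamma>1 t else \<gamma> (t - b))"
  have \<delta>: "continuous_map (subtopology euclideanreal {a..b + 1}) (Xf_topology X f) \<delta>"
    unfolding \<delta>_def using \<gamma>1(1,2) \<gamma>(1) by (rule continuous_map_join_paths) (simp add: \<gamma>1(4) \<gamma>(2))
  have "curve_length a b (ftilde f \<circ> \<delta>) = curve_length a b (ftilde f \<circ> \<gamma>1)"
    by (rule curve_length_cong) (simp add: \<delta>_def)
  moreover have "curve_length b (b + 1) (ftilde f \<circ> \<delta>) \<le> ereal ((b + 1 - b) * norm w)"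
  proof (rule curve_length_linear_le)
    fix s assume "b \<le> s" "s \<le> b + 1"
    then show "(ftilde f \<circ> \<delta>) s = (u - b *\<^sub>R w) + s *\<^sub>R w"
      using segment[of "s - b"] segment[of 0] \<gamma>1(4) \<gamma>(2)
      by (cases "s \<le> b") (auto simp: \<delta>_def algebra_simps)
  qed
  ultimately have "curve_length a (b + 1) (ftilde f \<circ> \<delta>) \<le> curve_length a b (ftilde f \<circ> \<gamma>1) + ereal (norm w)"
    using curve_length_subadditive[of a b "b + 1" "ftilde f \<circ> \<delta>"] \<gamma>1(1)
    by (simp add: add_left_mono order_trans)
  moreover have "Xf_dist X f p q' \<le> curve_length a (b + 1) (ftilde f \<circ> \<delta>)"
    by (rule Xf_dist_le_curve_length[OF _ \<delta>]) (use \<gamma>1 assms(4) in \<open>auto simp: \<delta>_def\<close>)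
  moreover have "curve_length a b (ftilde f \<circ> \<gamma>1) + ereal (norm w) \<le> ereal (r + norm w)"
    using \<gamma>1(5) add_right_mono[of _ "ereal r" "ereal (norm w)"] by simp
  ultimately show ?thesis
    unfolding w_def[symmetric] by (meson order_trans)
qed

lemma local_convexity_dataE:
  assumes "has_local_convexity_data X f" "x \<in> topspace X"
  obtains N where "openin X N" "x \<in> N"
    "\<And>U. \<lbrakk>openin X U; x \<in> U; U \<subseteq> N\<rbrakk> \<Longrightarrow> \<exists>C. convex C \<and> f ` U \<subseteq> C \<and>
        nbhd_in (subtopology euclidean C) (f x) (f ` U) \<and> open_map (subtopology X U) (subtopology euclidean C) f"
proof -
  have "\<exists>N. openin X N \<and> x \<in> N \<and> (\<forall>U. openin X U \<and> x \<in> U \<and> U \<subseteq> N \<longrightarrow>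
      (\<exists>C. is_convex_cone_with_vertex C (f x) \<and> f ` U \<subseteq> C \<and>
        nbhd_in (subtopology euclidean C) (f x) (f ` U) \<and> open_map (subtopology X U) (subtopology euclidean C) f \<and>
        (\<forall>U'. U' \<subseteq> U \<and> nbhd_in X x U' \<longrightarrow> nbhd_in (subtopology euclidean C) (f x) (f ` U'))))"
    using assms unfolding has_local_convexity_data_def by (rule bspec)
  then obtain N where N: "openin X N" "x \<in> N" "\<forall>U. openin X U \<and> x \<in> U \<and> U \<subseteq> N \<longrightarrow>
      (\<exists>C. is_convex_cone_with_vertex C (f x) \<and> f ` U \<subseteq> C \<and>
        nbhd_in (subtopology euclidean C) (f x) (f ` U) \<and> open_map (subtopology X U) (subtopology euclidean C) f \<and>
        (\<forall>U'. U' \<subseteq> U \<and> nbhd_in X x U' \<longrightarrow> nbhd_in (subtopology euclidean C) (f x) (f ` U')))"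
    by blast
  show thesis
  proof (rule that[OF N(1,2)])
    fix U assume "openin X U" "x \<in> U" "U \<subseteq> N"
    then show "\<exists>C. convex C \<and> f ` U \<subseteq> C \<and>
        nbhd_in (subtopology euclidean C) (f x) (f ` U) \<and> open_map (subtopology X U) (subtopology euclidean C) f"
      using N(3) unfolding is_convex_cone_with_vertex_def by blast
  qed
qed

lemma continuous_map_fclass_lift:
  assumes "LFC X f G" "G \<subseteq> topspace X"
    and open_map: "open_map (subtopology X G) (subtopology euclidean C) f"
    and s: "continuous_map T (subtopology euclidean C) s"
    and lift: "\<And>t. t \<in> topspace T \<Longrightarrow> g t \<in> G \<and> f (g t) = s t"
  shows "continuous_map T (Xf_topology X f) (fclass X f \<circ> g)"
  unfolding continuous_map_def
proof (intro conjI allI impI)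
  show "fclass X f \<circ> g \<in> topspace T \<rightarrow> topspace (Xf_topology X f)"
  proof
    fix t assume "t \<in> topspace T"
    then have "g t \<in> topspace X"
      using lift assms(2) by blast
    then show "(fclass X f \<circ> g) t \<in> topspace (Xf_topology X f)"
      by (simp add: topspace_Xf_topology Xf_def)
  qed
  fix W assume "openin (Xf_topology X f) W"
  then have "openin X {x \<in> topspace X. fclass X f x \<in> W}" (is "openin X ?P")
    using quotient_imp_continuous_map[OF quotient_map_fclass] openin_continuous_map_preimage by blast
  then have "openin (subtopology euclidean C) (f ` (?P \<inter> G))"
    using open_map by (simp add: open_map_def openin_subtopology_Int)
  then have "openin T {t \<in> topspace T. s t \<in> f ` (?P \<inter> G)}"
    by (rule openin_continuous_map_preimage[OF s])
  moreover have "{t \<in> topspace T. s t \<in> f ` (?P \<inter> G)} = {t \<in> topspace T. (fclass X f \<circ> g) t \<in> W}"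
  proof (intro Collect_cong conj_cong refl iffI)
    fix t assume "t \<in> topspace T" "s t \<in> f ` (?P \<inter> G)"
    moreover obtain x where "x \<in> ?P" "x \<in> G" "s t = f x"
      using \<open>s t \<in> f ` (?P \<inter> G)\<close> by blast
    ultimately have "fclass X f (g t) = fclass X f x"
      using lift LFC_imp_fclass_eq[OF assms(1)] by metis
    then show "(fclass X f \<circ> g) t \<in> W"
      using \<open>x \<in> ?P\<close> by simp
  next
    fix t assume "t \<in> topspace T" "(fclass X f \<circ> g) t \<in> W"
    moreover have "g t \<in> G" "f (g t) = s t"
      using lift \<open>t \<in> topspace T\<close> by auto
    ultimately have "g t \<in> ?P \<inter> G"
      using assms(2) by auto
    then show "s t \<in> f ` (?P \<inter> G)"
      using \<open>f (g t) = s t\<close> by (metis image_eqI)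
  qed
  ultimately show "openin T {t \<in> topspace T. (fclass X f \<circ> g) t \<in> W}"
    by simp
qed

lemma segment_paths_to_fclass:
  fixes f :: "'a \<Rightarrow> 'v::real_normed_vector"
  assumes cf: "continuous_map X euclidean f" and lcd: "has_local_convexity_data X f"
    and lfc: "locally_fiber_connected X f" and y: "y \<in> topspace X"
  obtains N where "openin X N" "y \<in> N"
    "\<And>y'. y' \<in> N \<Longrightarrow>
      \<exists>\<gamma>. lifted_segment X f \<gamma> (f y') (f y) \<and> \<gamma> 0 = fclass X f y' \<and> \<gamma> 1 = fclass X f y"
proof -
  obtain N0 where N0: "openin X N0" "y \<in> N0"
    and convex_data: "\<And>U. \<lbrakk>openin X U; y \<in> U; U \<subseteq> N0\<rbrakk> \<Longrightarrow> \<exists>C. convex C \<and> f ` U \<subseteq> C \<and>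
        nbhd_in (subtopology euclidean C) (f y) (f ` U) \<and> open_map (subtopology X U) (subtopology euclidean C) f"
    using local_convexity_dataE[OF lcd y] by blast
  obtain U where U: "U \<subseteq> N0" "nbhd_in X y U" "LFC X f U"
    using lfc[unfolded locally_fiber_connected_def, rule_format, OF y, of N0] N0 by blast
  then obtain G where G: "openin X G" "y \<in> G" "G \<subseteq> U"
    unfolding nbhd_in_def by blast
  have "LFC X f G"
    using LFC_subset[OF U(3) G(3)] .
  obtain C where "convex C" "f ` G \<subseteq> C" and nbhd: "nbhd_in (subtopology euclidean C) (f y) (f ` G)"
    and open_map: "open_map (subtopology X G) (subtopology euclidean C) f"
    using convex_data[OF G(1,2) subset_trans[OF G(3) U(1)]] by blast
  obtain V where V: "openin (subtopology euclidean C) V" "f y \<in> V" "V \<subseteq> f ` G"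
    using nbhd unfolding nbhd_in_def by blast
  then obtain T where "open T" "V = T \<inter> C"
    by (auto simp: openin_open)
  moreover obtain e where "e > 0" "ball (f y) e \<subseteq> T"
    using open_contains_ball_eq V(2) \<open>open T\<close> \<open>V = T \<inter> C\<close> by blast
  ultimately have ball_C: "ball (f y) e \<inter> C \<subseteq> f ` G"
    using V(3) by blast
  define N where "N = G \<inter> {x \<in> topspace X. f x \<in> ball (f y) e}"
  have "openin X N"
    unfolding N_def using G(1) openin_continuous_map_preimage[OF cf, of "ball (f y) e"] by auto
  moreover have "y \<in> N"
    using y G(2) \<open>e > 0\<close> by (simp add: N_def)
  moreover have "\<exists>\<gamma>. lifted_segment X f \<gamma> (f y') (f y) \<and> \<gamma> 0 = fclass X f y' \<and> \<gamma> 1 = fclass X f y"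
    if "y' \<in> N" for y'
  proof -
    define s where "s t = f y' + t *\<^sub>R (f y - f y')" for t
    have s_convex: "s t = (1 - t) *\<^sub>R f y' + t *\<^sub>R f y" for t
      by (simp add: s_def algebra_simps)
    have ends: "f y' \<in> C \<inter> ball (f y) e" "f y \<in> C \<inter> ball (f y) e"
      using that G(2) \<open>f ` G \<subseteq> C\<close> \<open>e > 0\<close> by (auto simp: N_def)
    have s_C: "s t \<in> C \<inter> ball (f y) e" if "t \<in> {0..1}" for t
      unfolding s_convex using that
      by (intro convexD[OF convex_Int[OF \<open>convex C\<close> convex_ball] ends]) auto
    then have s_G: "s t \<in> f ` G" if "t \<in> {0..1}" for t
      using that ball_C by blast
    have "continuous_on {0..1} s"
      unfolding s_def by (intro continuous_intros)
    then have s_cont: "continuous_map (subtopology euclideanreal {0..1}) (subtopology euclidean C) s"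
      using s_C by (auto simp: continuous_map_in_subtopology continuous_map_iff_continuous)
    define g where "g t = (SOME x. x \<in> G \<and> f x = s t)" for t
    have g: "g t \<in> G \<and> f (g t) = s t" if "t \<in> {0..1}" for t
      unfolding g_def by (rule someI_ex) (use s_G[OF that] in auto)
    have "G \<subseteq> topspace X"
      using G(1) openin_subset by blast
    then have "continuous_map (subtopology euclideanreal {0..1}) (Xf_topology X f) (fclass X f \<circ> g)"
      using \<open>LFC X f G\<close> open_map s_cont g by (intro continuous_map_fclass_lift) auto
    moreover have "fclass X f (g 0) = fclass X f y'"
      using g[of 0] that by (intro LFC_imp_fclass_eq[OF \<open>LFC X f G\<close>]) (auto simp: s_def N_def)
    moreover have "fclass X f (g 1) = fclass X f y"
      using g[of 1] G(2) by (intro LFC_imp_fclass_eq[OF \<open>LFC X f G\<close>]) (auto simp: s_def)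
    moreover have "ftilde f (fclass X f (g t)) = s t" if "t \<in> {0..1}" for t
      using g[OF that] \<open>G \<subseteq> topspace X\<close> by (simp add: ftilde_fclass subsetD)
    ultimately show ?thesis
      unfolding lifted_segment_def s_def by (intro exI[of _ "fclass X f \<circ> g"]) auto
  qed
  ultimately show thesis
    using that by blast
qed

lemma Xf_dist_gt_locally:
  fixes f :: "'a \<Rightarrow> 'v::real_normed_vector"
  assumes cf: "continuous_map X euclidean f" and lcd: "has_local_convexity_data X f"
    and lfc: "locally_fiber_connected X f" and y: "y \<in> topspace X"
    and gt: "ereal r < Xf_dist X f p (fclass X f y)"
  obtains N where "openin X N" "y \<in> N" "\<And>y'. y' \<in> N \<Longrightarrow> ereal r < Xf_dist X f p (fclass X f y')"
proof -
  obtain z where "ereal r < ereal z" and z: "ereal z < Xf_dist X f p (fclass X f y)"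
    using ereal_dense2[OF gt] by blast
  define \<epsilon> where "\<epsilon> = (z - r) / 2"
  have "\<epsilon> > 0"
    using \<open>ereal r < ereal z\<close> by (simp add: \<epsilon>_def)
  obtain N where N: "openin X N" "y \<in> N"
    and paths: "\<And>y'. y' \<in> N \<Longrightarrow>
      \<exists>\<gamma>. lifted_segment X f \<gamma> (f y') (f y) \<and> \<gamma> 0 = fclass X f y' \<and> \<gamma> 1 = fclass X f y"
    using segment_paths_to_fclass[OF cf lcd lfc y] by blast
  define N' where "N' = N \<inter> {x \<in> topspace X. f x \<in> ball (f y) \<epsilon>}"
  have "openin X N'"
    unfolding N'_def using N(1) openin_continuous_map_preimage[OF cf, of "ball (f y) \<epsilon>"] by auto
  moreover have "y \<in> N'"
    using N(2) y \<open>\<epsilon> > 0\<close> by (simp add: N'_def)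
  moreover have "ereal r < Xf_dist X f p (fclass X f y')" if y': "y' \<in> N'" for y'
  proof (rule ccontr)
    assume "\<not> ereal r < Xf_dist X f p (fclass X f y')"
    then have close: "Xf_dist X f p (fclass X f y') < ereal (r + \<epsilon>)"
      using \<open>\<epsilon> > 0\<close> by (simp add: not_less order_le_less_trans)
    obtain \<gamma> where "lifted_segment X f \<gamma> (f y') (f y)" "\<gamma> 0 = fclass X f y'" "\<gamma> 1 = fclass X f y"
      using paths[of y'] y' by (auto simp: N'_def)
    then have "Xf_dist X f p (fclass X f y) \<le> ereal (r + \<epsilon> + norm (f y - f y'))"
      by (rule Xf_dist_le_add_segment[OF close])
    also have "\<dots> < ereal z"
    proof -
      have "norm (f y - f y') < \<epsilon>"
        using y' by (simp add: N'_def dist_norm)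
      then have "r + \<epsilon> + norm (f y - f y') < z"
        by (simp add: \<epsilon>_def field_simps)
      then show ?thesis
        by simp
    qed
    finally show False
      using z by simp
  qed
  ultimately show thesis
    using that by blast
qed

lemma closedin_Xf_dist_le:
  fixes f :: "'a \<Rightarrow> 'v::real_normed_vector"
  assumes cf: "continuous_map X euclidean f" and lcd: "has_local_convexity_data X f"
    and lfc: "locally_fiber_connected X f"
  shows "closedin (Xf_topology X f) {q \<in> Xf X f. Xf_dist X f p q \<le> ereal r}"
proof -
  let ?B = "{q \<in> Xf X f. Xf_dist X f p q \<le> ereal r}"
  have "openin X (topspace X - {x \<in> topspace X. fclass X f x \<in> ?B})"
  proof (subst openin_subopen, intro ballI)
    fix y assume "y \<in> topspace X - {x \<in> topspace X. fclass X f x \<in> ?B}"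
    then have "y \<in> topspace X" "ereal r < Xf_dist X f p (fclass X f y)"
      by (auto simp: Xf_def)
    then obtain N where "openin X N" "y \<in> N" "\<And>y'. y' \<in> N \<Longrightarrow> ereal r < Xf_dist X f p (fclass X f y')"
      using Xf_dist_gt_locally[OF cf lcd lfc] by metis
    then show "\<exists>T. openin X T \<and> y \<in> T \<and> T \<subseteq> topspace X - {x \<in> topspace X. fclass X f x \<in> ?B}"
      using openin_subset by (intro exI[of _ N]) fastforce
  qed
  then have "closedin X {x \<in> topspace X. fclass X f x \<in> ?B}"
    by (simp add: closedin_def)
  moreover have "?B \<subseteq> topspace (Xf_topology X f)"
    by (auto simp: topspace_Xf_topology)
  ultimately show ?thesis
    using quotient_map_fclass[of X f] unfolding quotient_map_closedin by blast
qed

section \<open>Locally finite sequences in normal spaces\<close>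

definition locally_finite_seq :: "'a topology \<Rightarrow> (nat \<Rightarrow> 'a) \<Rightarrow> bool" where
  "locally_finite_seq X y \<longleftrightarrow> range y \<subseteq> topspace X \<and>
     (\<forall>x\<in>topspace X. \<exists>V. openin X V \<and> x \<in> V \<and> finite {n. y n \<in> V})"

lemma closedin_image_locally_finite_seq:
  assumes "t1_space X" "locally_finite_seq X y"
  shows "closedin X (y ` I)"
proof -
  have "locally_finite_in X ((\<lambda>n. {y n}) ` I)"
    unfolding locally_finite_in_def
  proof (intro conjI ballI)
    show "\<Union> ((\<lambda>n. {y n}) ` I) \<subseteq> topspace X"
      using assms(2) by (auto simp: locally_finite_seq_def)
    fix x assume "x \<in> topspace X"
    then obtain V where "openin X V" "x \<in> V" "finite {n. y n \<in> V}"
      using assms(2) by (auto simp: locally_finite_seq_def)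
    moreover have "{U \<in> (\<lambda>n. {y n}) ` I. U \<inter> V \<noteq> {}} \<subseteq> (\<lambda>n. {y n}) ` {n. y n \<in> V}"
      by auto
    ultimately show "\<exists>V. openin X V \<and> x \<in> V \<and> finite {U \<in> (\<lambda>n. {y n}) ` I. U \<inter> V \<noteq> {}}"
      by (meson finite_imageI finite_subset)
  qed
  moreover have "closedin X {y n}" for n
    using assms by (auto simp: locally_finite_seq_def t1_space_closedin_singleton)
  ultimately have "closedin X (\<Union> ((\<lambda>n. {y n}) ` I))"
    by (intro closedin_locally_finite_Union) auto
  then show ?thesis
    by (simp add: UNION_singleton_eq_range)
qed

lemma locally_finite_seq_extension:
  fixes h :: "nat \<Rightarrow> real"
  assumes "normal_space X" "t1_space X" "locally_finite_seq X y" "inj y"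
  obtains g where "continuous_map X euclideanreal g" "\<And>n. g (y n) = h n"
proof -
  have "continuous_map (subtopology X (range y)) euclideanreal (h \<circ> inv y)"
    unfolding continuous_map_closedin
  proof (intro conjI allI impI)
    fix C :: "real set"
    have "{x \<in> topspace (subtopology X (range y)). (h \<circ> inv y) x \<in> C} = y ` {n. h n \<in> C}"
      using assms(3,4) by (auto simp: locally_finite_seq_def)
    then show "closedin (subtopology X (range y)) {x \<in> topspace (subtopology X (range y)). (h \<circ> inv y) x \<in> C}"
      using closedin_image_locally_finite_seq[OF assms(2,3)] by (simp add: closedin_subset_topspace image_mono)
  qed simp
  then obtain g where "continuous_map X euclideanreal g" "\<And>x. x \<in> range y \<Longrightarrow> g x = (h \<circ> inv y) x"
    using Tietze_extension_realinterval[OF assms(1) closedin_image_locally_finite_seq[OF assms(2,3)]]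
    by (metis UNIV_not_empty is_interval_univ subset_UNIV)
  then show thesis
    using that assms(4) by simp
qed

text \<open>Tietze gives \<open>g\<close> with \<open>g (y n) = 1 / (n + 1)\<close>; the sets \<open>U n\<close> force \<open>g (z n) \<rightarrow> 0\<close>, so the \<open>z n\<close> can only
  accumulate where \<open>g \<le> 0\<close>, and normality keeps them away from there.\<close>

lemma locally_finite_seq_neighbourhoods:
  assumes normal: "normal_space X" and "t1_space X" "locally_finite_seq X y" "inj y"
  obtains U where "\<And>n. openin X (U n)" "\<And>n. y n \<in> U n"
    "\<And>z. (\<And>n. z n \<in> U n) \<Longrightarrow> locally_finite_seq X z"
proof -
  obtain g where g: "continuous_map X euclideanreal g" "\<And>n. g (y n) = inverse (real (Suc n))"
    using locally_finite_seq_extension[OF assms(1-4), where h = "\<lambda>n. inverse (real (Suc n))"] by blast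
  have "closedin X {x \<in> topspace X. g x \<in> {..0}}" (is "closedin X ?Z")
    using closedin_continuous_map_preimage[OF g(1), of "{..0}"] by simp
  moreover have "disjnt (range y) ?Z"
    using g(2) by (auto simp: disjnt_def)
  ultimately obtain G G' where G: "openin X G" "openin X G'" "range y \<subseteq> G" "?Z \<subseteq> G'" "disjnt G G'"
    using normal[unfolded normal_space_def, rule_format, of "range y" ?Z]
      closedin_image_locally_finite_seq[OF assms(2,3)] by blast
  define U where "U n = G \<inter> {x \<in> topspace X. g x \<in> {..<2 * inverse (real (Suc n))}}" for n
  have "openin X (U n)" for n
    unfolding U_def using openin_continuous_map_preimage[OF g(1), of "{..<2 * inverse (real (Suc n))}"]
    by (intro openin_Int[OF G(1)]) simp
  moreover have "y n \<in> U n" for n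
    using G(3) g(2) assms(3) by (auto simp: U_def locally_finite_seq_def)
  moreover have "locally_finite_seq X z" if z: "\<And>n. z n \<in> U n" for z
    unfolding locally_finite_seq_def
  proof (intro conjI ballI)
    show "range z \<subseteq> topspace X"
      using z by (auto simp: U_def)
    fix x assume x: "x \<in> topspace X"
    show "\<exists>V. openin X V \<and> x \<in> V \<and> finite {n. z n \<in> V}"
    proof (cases "g x \<le> 0")
      case True
      then have "x \<in> G'" "{n. z n \<in> G'} = {}"
        using x G(4,5) z by (auto simp: U_def disjnt_def)
      then show ?thesis
        using G(2) by auto
    next
      case False
      define V where "V = {x' \<in> topspace X. g x' \<in> {g x / 2<..}}"
      have "{n. z n \<in> V} \<subseteq> {..nat \<lceil>4 / g x\<rceil>}"
      proof
        fix n assume "n \<in> {n. z n \<in> V}"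
        then have "g x / 2 < 2 * inverse (real (Suc n))"
          using z[of n] by (auto simp: V_def U_def)
        then have "real n < 4 / g x"
          using False by (simp add: field_simps)
        then show "n \<in> {..nat \<lceil>4 / g x\<rceil>}"
          by (simp add: le_nat_iff) linarith
      qed
      moreover have "openin X V"
        unfolding V_def by (rule openin_continuous_map_preimage[OF g(1)]) simp
      moreover have "x \<in> V"
        unfolding V_def using x False by simp
      ultimately show ?thesis
        using finite_subset by blast
    qed
  qed
  ultimately show thesis
    using that by blast
qed

section \<open>Finiteness of the fibres\<close>

lemma convex_openin_singleton:
  fixes C :: "'v::real_normed_vector set"
  assumes "convex C" "openin (subtopology euclidean C) {c}"
  shows "C = {c}"
proof -
  have "c \<in> C"
    using openin_subset[OF assms(2)] by simp
  then have "closedin (subtopology euclidean C) {c}"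
    using closedin_closed_Int[of "{c}" C] by (simp add: Int_absorb1)
  then show ?thesis
    using assms \<open>c \<in> C\<close> convex_connected[OF assms(1)] unfolding connected_clopen by blast
qed

text \<open>The points near which \<open>f\<close> is constantly \<open>f x0\<close> form an open set. It is also closed: if the
  neighbourhood given by local convexity data at some point met this set, the open map there would
  send an open set onto a single point of the convex cone, forcing the cone, and hence \<open>f\<close> on the
  whole neighbourhood, to be that point.\<close>

lemma locally_constant_point_imp_constant:
  fixes f :: "'a \<Rightarrow> 'v::real_normed_vector"
  assumes conn: "connected_space X" and lcd: "has_local_convexity_data X f"
    and "openin X W" "x0 \<in> W" "\<forall>z\<in>W. f z = f x0"
  shows "\<forall>x\<in>topspace X. f x = f x0"
proof -
  define S where "S = {x \<in> topspace X. \<exists>W. openin X W \<and> x \<in> W \<and> (\<forall>z\<in>W. f z = f x0)}"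
  have "openin X S"
  proof (subst openin_subopen, intro ballI)
    fix x assume "x \<in> S"
    then obtain W where W: "openin X W" "x \<in> W" "\<forall>z\<in>W. f z = f x0"
      by (auto simp: S_def)
    moreover have "W \<subseteq> S"
    proof
      fix w assume "w \<in> W"
      moreover have "w \<in> topspace X"
        using openin_subset[OF W(1)] \<open>w \<in> W\<close> by blast
      ultimately show "w \<in> S"
        unfolding S_def using W by blast
    qed
    ultimately show "\<exists>T. openin X T \<and> x \<in> T \<and> T \<subseteq> S"
      by blast
  qed
  moreover have "openin X (topspace X - S)"
  proof (subst openin_subopen, intro ballI)
    fix x assume x: "x \<in> topspace X - S"
    obtain N where N: "openin X N" "x \<in> N"
      and convex_data: "\<And>U. \<lbrakk>openin X U; x \<in> U; U \<subseteq> N\<rbrakk> \<Longrightarrow> \<exists>C. convex C \<and> f ` U \<subseteq> C \<and>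
        nbhd_in (subtopology euclidean C) (f x) (f ` U) \<and> open_map (subtopology X U) (subtopology euclidean C) f"
      using local_convexity_dataE[OF lcd, of x] x by blast
    obtain C where "convex C" "f ` N \<subseteq> C" and open_map: "open_map (subtopology X N) (subtopology euclidean C) f"
      using convex_data[OF N order_refl] by blast
    have "N \<inter> S = {}"
    proof (rule ccontr)
      assume "N \<inter> S \<noteq> {}"
      then obtain z W where "z \<in> N" "openin X W" "z \<in> W" and W: "\<forall>w\<in>W. f w = f x0"
        by (auto simp: S_def)
      then have "f ` (W \<inter> N) = {f x0}"
        by auto
      moreover have "openin (subtopology euclidean C) (f ` (W \<inter> N))"
        using open_map \<open>openin X W\<close> by (simp add: open_map_def openin_subtopology_Int)
      ultimately have "C = {f x0}"
        using convex_openin_singleton[OF \<open>convex C\<close>] by simp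
      then have "\<forall>w\<in>N. f w = f x0"
        using \<open>f ` N \<subseteq> C\<close> by auto
      then show False
        using x N by (auto simp: S_def)
    qed
    moreover have "N \<subseteq> topspace X"
      using openin_subset[OF N(1)] .
    ultimately show "\<exists>T. openin X T \<and> x \<in> T \<and> T \<subseteq> topspace X - S"
      using N by blast
  qed
  moreover have "x0 \<in> S"
    unfolding S_def using assms(3-5) openin_subset[OF assms(3)] by blast
  moreover have "S \<subseteq> topspace X"
    by (auto simp: S_def)
  ultimately have "S = topspace X"
    using conn unfolding connected_space_clopen_in closedin_def by blast
  then show ?thesis
    unfolding S_def by blast
qed

lemma locally_finite_seq_fclass_representatives:
  fixes f :: "'a \<Rightarrow> 'v::t1_space"
  assumes cf: "continuous_map X euclidean f" and lfc: "locally_fiber_connected X f"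
    and y: "\<And>n. y n \<in> topspace X" "\<And>n. f (y n) = v" and inj: "inj (fclass X f \<circ> y)"
  shows "locally_finite_seq X y"
  unfolding locally_finite_seq_def
proof (intro conjI ballI)
  show "range y \<subseteq> topspace X"
    using y(1) by auto
  fix x assume x: "x \<in> topspace X"
  show "\<exists>V. openin X V \<and> x \<in> V \<and> finite {n. y n \<in> V}"
  proof (cases "f x = v")
    case False
    define V where "V = {x \<in> topspace X. f x \<in> - {v}}"
    have "openin X V"
      unfolding V_def by (rule openin_continuous_map_preimage[OF cf]) (simp add: open_Compl closed_singleton)
    moreover have "x \<in> V"
      using x False by (simp add: V_def)
    moreover have "{n. y n \<in> V} = {}"
      using y(2) by (simp add: V_def)
    ultimately show ?thesis
      by (metis finite.emptyI)
  next
    case True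
    obtain U where "nbhd_in X x U" "LFC X f U"
      using lfc[unfolded locally_fiber_connected_def, rule_format, OF x, of "topspace X"] x by blast
    then obtain V where V: "openin X V" "x \<in> V" "V \<subseteq> U"
      unfolding nbhd_in_def by blast
    have "(fclass X f \<circ> y) ` {n. y n \<in> V} \<subseteq> {fclass X f x}"
      using LFC_imp_fclass_eq[OF \<open>LFC X f U\<close>] V(2,3) y(2) True by auto
    then have "finite {n. y n \<in> V}"
      using inj by (meson finite.emptyI finite_imageD finite_insert finite_subset inj_on_subset subset_UNIV)
    then show ?thesis
      using V by blast
  qed
qed

lemma finite_fclasses_in_fiber:
  fixes f :: "'a \<Rightarrow> ('w::real_normed_vector \<Rightarrow>\<^sub>L real)"
  assumes conn: "connected_space X" and "Hausdorff_space X" and normal: "normal_space X"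
    and cf: "continuous_map X euclidean f" and lcd: "has_local_convexity_data X f"
    and lfc: "locally_fiber_connected X f" and closed: "closed_map X weak_star_topology f"
  shows "finite (fclass X f ` {x \<in> topspace X. f x = v})"
proof (cases "\<exists>W x0. openin X W \<and> x0 \<in> W \<and> (\<forall>z\<in>W. f z = f x0)")
  case True
  then obtain W x0 where W: "openin X W" "x0 \<in> W" "\<forall>z\<in>W. f z = f x0"
    by blast
  have "\<forall>x\<in>topspace X. f x = f x0"
    by (rule locally_constant_point_imp_constant[OF conn lcd W])
  then have "fiber X f (f x0) = topspace X"
    by (auto simp: fiber_def)
  then have "subtopology X (fiber X f (f x0)) = X"
    by (simp add: subtopology_topspace)
  moreover have "x0 \<in> topspace X"
    using openin_subset[OF W(1)] W(2) by blast
  ultimately have "fclass X f x = fclass X f x0" if "x \<in> topspace X" for x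
    using that by (simp add: fclass_eqI connected_space_imp_connected_component_of[OF conn])
  then have "fclass X f ` {x \<in> topspace X. f x = v} \<subseteq> {fclass X f x0}"
    by auto
  then show ?thesis
    using finite_subset by blast
next
  case False
  show ?thesis
  proof (rule ccontr)
    assume "infinite (fclass X f ` {x \<in> topspace X. f x = v})"
    then obtain c :: "nat \<Rightarrow> 'a set" where "inj c" "range c \<subseteq> fclass X f ` {x \<in> topspace X. f x = v}"
      using infinite_countable_subset by blast
    then have "\<forall>n. \<exists>x. x \<in> topspace X \<and> f x = v \<and> fclass X f x = c n"
      by blast
    from choice[OF this] obtain y where "\<forall>n. y n \<in> topspace X \<and> f (y n) = v \<and> fclass X f (y n) = c n"
      by blast
    then have y: "\<And>n. y n \<in> topspace X" "\<And>n. f (y n) = v" "\<And>n. fclass X f (y n) = c n"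
      by auto
    have "inj (fclass X f \<circ> y)"
      using \<open>inj c\<close> y(3) by (simp add: o_def)
    then have "inj y"
      using inj_on_imageI2 by blast
    have "locally_finite_seq X y"
      using locally_finite_seq_fclass_representatives[OF cf lfc y(1,2) \<open>inj (fclass X f \<circ> y)\<close>] .
    then obtain U where U: "\<And>n. openin X (U n)" "\<And>n. y n \<in> U n"
      and U_seq: "\<And>z. (\<And>n. z n \<in> U n) \<Longrightarrow> locally_finite_seq X z"
      using locally_finite_seq_neighbourhoods[OF normal Hausdorff_imp_t1_space[OF assms(2)] _ \<open>inj y\<close>] by blast
    define B where "B n = U n \<inter> {x \<in> topspace X. f x \<in> ball v (inverse (real (Suc n)))}" for n
    have "openin X (B n)" "y n \<in> B n" for n
      unfolding B_def using U y openin_continuous_map_preimage[OF cf, of "ball v (inverse (real (Suc n)))"]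
      by auto
    then have "\<exists>z \<in> B n. f z \<noteq> v" for n
      using False y(2) by metis
    then obtain z where z: "\<And>n. z n \<in> B n" "\<And>n. f (z n) \<noteq> v"
      by metis
    have "locally_finite_seq X z"
      using U_seq z(1) by (simp add: B_def)
    then have "closedin X (range z)"
      by (rule closedin_image_locally_finite_seq[OF Hausdorff_imp_t1_space[OF assms(2)]])
    then have "closedin weak_star_topology (f ` range z)"
      using closed by (simp add: closed_map_def)
    then have "open (- f ` range z)"
      by (simp add: closedin_weak_star_imp_closed open_Compl)
    moreover have "v \<in> - f ` range z"
      using z(2) by auto
    ultimately obtain e where "e > 0" "ball v e \<subseteq> - f ` range z"
      unfolding open_contains_ball by blast
    moreover obtain n where "inverse (real (Suc n)) < e"
      using reals_Archimedean[OF \<open>e > 0\<close>] by blast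
    moreover have "f (z n) \<in> ball v (inverse (real (Suc n)))"
      using z(1)[of n] by (simp add: B_def)
    ultimately show False
      by (metis ComplD image_eqI mem_ball order.strict_trans rangeI subsetD)
  qed
qed

lemma proper_map_ftilde:
  assumes "closed_map (Xf_topology X f) Y (ftilde f)"
    and "\<And>v. finite (fclass X f ` {x \<in> topspace X. f x = v})"
  shows "proper_map (Xf_topology X f) Y (ftilde f)"
  unfolding proper_map_def
proof (intro conjI ballI assms(1))
  fix v
  show "compactin (Xf_topology X f) {c \<in> topspace (Xf_topology X f). ftilde f c = v}"
  proof (rule finite_imp_compactin)
    show "finite {c \<in> topspace (Xf_topology X f). ftilde f c = v}"
      using assms(2) by (simp add: topspace_Xf_topology fiber_ftilde)
  qed auto
qed

lemma compactin_Xf_dist_le: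
  fixes f :: "'a \<Rightarrow> ('w::real_normed_vector \<Rightarrow>\<^sub>L real)"
  assumes "continuous_map X euclidean f" "has_local_convexity_data X f" "locally_fiber_connected X f"
    and proper: "proper_map (Xf_topology X f) weak_star_topology (ftilde f)" and "0 \<le> r"
  shows "compactin (Xf_topology X f) {q \<in> Xf X f. Xf_dist X f p q \<le> ereal r}"
proof (rule closed_compactin)
  show "compactin (Xf_topology X f) {q \<in> topspace (Xf_topology X f). ftilde f q \<in> cball (ftilde f p) r}"
    using compactin_proper_map_preimage[OF proper compactin_weak_star_cball[OF \<open>0 \<le> r\<close>]] by simp
  show "{q \<in> Xf X f. Xf_dist X f p q \<le> ereal r}
      \<subseteq> {q \<in> topspace (Xf_topology X f). ftilde f q \<in> cball (ftilde f p) r}"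
    using norm_le_Xf_dist[of f p _ X] order_trans
    by (fastforce simp: topspace_Xf_topology dist_norm)
  show "closedin (Xf_topology X f) {q \<in> Xf X f. Xf_dist X f p q \<le> ereal r}"
    using assms(1-3) by (rule closedin_Xf_dist_le)
qed

theorem proposition2p29:
  fixes X :: "'a topology"
    and f :: "'a \<Rightarrow> ('w::banach \<Rightarrow>\<^sub>L real)"
  assumes "connected_space X" and "locally_connected_space X" and "Hausdorff_space X"
    and "normal_space X" and "first_countable X"
    and "continuous_map X euclidean f"
    and "has_local_convexity_data X f"
    and "locally_fiber_connected X f"
    and "closed_map X weak_star_topology f"
  shows "continuous_map (Xf_topology X f) euclidean (ftilde f) \<and>
         proper_map (Xf_topology X f) euclidean (ftilde f) \<and>
         continuous_map (Xf_topology X f) weak_star_topology (ftilde f) \<and>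
         proper_map (Xf_topology X f) weak_star_topology (ftilde f) \<and>
         (\<forall>p\<in>Xf X f. \<forall>r>0.
            compactin (Xf_topology X f) {q \<in> Xf X f. Xf_dist X f p q \<le> ereal r})"
proof -
  have closed_weak: "closed_map (Xf_topology X f) weak_star_topology (ftilde f)"
    using assms(9) by (rule closed_map_ftilde)
  have finite_fibres: "finite (fclass X f ` {x \<in> topspace X. f x = v})" for v
    by (rule finite_fclasses_in_fiber[OF assms(1,3,4,6-9)])
  have proper_weak: "proper_map (Xf_topology X f) weak_star_topology (ftilde f)"
    using closed_weak finite_fibres by (rule proper_map_ftilde)
  have "proper_map (Xf_topology X f) euclidean (ftilde f)"
    using closed_map_weak_star_imp_closed_map[OF closed_weak] finite_fibres by (rule proper_map_ftilde)
  moreover have "continuous_map (Xf_topology X f) euclidean (ftilde f)"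
    using assms(6) by (rule continuous_map_ftilde)
  moreover have "continuous_map (Xf_topology X f) weak_star_topology (ftilde f)"
    using continuous_map_ftilde[OF continuous_map_compose[OF assms(6) continuous_map_weak_star_id]]
    by (simp add: o_def)
  moreover have "compactin (Xf_topology X f) {q \<in> Xf X f. Xf_dist X f p q \<le> ereal r}" if "r > 0" for p r
    using assms(6-8) proper_weak that by (intro compactin_Xf_dist_le) auto
  ultimately show ?thesis
    using proper_weak by blast
qed

end
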